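(* Let $(A,\cdot)$ be a nearly associative algebra over a field $\mathbb{K}$ of characteristic $0$. Then $(A,\cdot)$ is Lie-admissible, i.e. $(A,[\cdot,\cdot])$ with $[x,y]=x\cdot y-y\cdot x$ is a Lie algebra.
   Context: An algebra $(A,\cdot)$ is a linear space $A$ over $\mathbb{K}$ with a bilinear product $\cdot:A\times A\to A$. It is called nearly associative if $x\cdot(y\cdot z)=(z\cdot x)\cdot y$ for all $x,y,z\in A$. An algebra is Lie-admissible if the commutator bracket $[x,y]=x\cdot y-y\cdot x$ makes $A$ a Lie algebra. *)

theory Defs
  imports "HOL.Vector_Spaces"
begin

definition bilinear_product ::
  "('k::field \<Rightarrow> 'a::ab_group_add \<Rightarrow> 'a) \<Rightarrow> ('a \<Rightarrow> 'a \<Rightarrow> 'a) \<Rightarrow> bool" where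
  "bilinear_product scale p \<longleftrightarrow>
     (\<forall>x y z. p (x + y) z = p x z + p y z) \<and>
     (\<forall>x y z. p x (y + z) = p x y + p x z) \<and>
     (\<forall>c x y. p (scale c x) y = scale c (p x y)) \<and>
     (\<forall>c x y. p x (scale c y) = scale c (p x y))"

definition algebra_over ::
  "('k::field \<Rightarrow> 'a::ab_group_add \<Rightarrow> 'a) \<Rightarrow> ('a \<Rightarrow> 'a \<Rightarrow> 'a) \<Rightarrow> bool" where
  "algebra_over scale p \<longleftrightarrow> vector_space scale \<and> bilinear_product scale p"

definition nearly_associative :: "('a \<Rightarrow> 'a \<Rightarrow> 'a) \<Rightarrow> bool" where
  "nearly_associative p \<longleftrightarrow> (\<forall>x y z. p x (p y z) = p (p z x) y)"

definition lie_algebra ::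
  "('k::field \<Rightarrow> 'a::ab_group_add \<Rightarrow> 'a) \<Rightarrow> ('a \<Rightarrow> 'a \<Rightarrow> 'a) \<Rightarrow> bool" where
  "lie_algebra scale b \<longleftrightarrow>
     vector_space scale \<and> bilinear_product scale b \<and>
     (\<forall>x. b x x = 0) \<and>
     (\<forall>x y z. b x (b y z) + b y (b z x) + b z (b x y) = 0)"

definition commutator :: "('a::ab_group_add \<Rightarrow> 'a \<Rightarrow> 'a) \<Rightarrow> 'a \<Rightarrow> 'a \<Rightarrow> 'a" where
  "commutator p x y = p x y - p y x"

definition lie_admissible ::
  "('k::field \<Rightarrow> 'a::ab_group_add \<Rightarrow> 'a) \<Rightarrow> ('a \<Rightarrow> 'a \<Rightarrow> 'a) \<Rightarrow> bool" where
  "lie_admissible scale p \<longleftrightarrow> lie_algebra scale (commutator p)"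

end

theory Submission
  imports Defs
begin

text \<open>Near associativity turns each triple product x(yz) into the product (zx)y, so the cyclic
  sum of the x(yz) equals the cyclic sum of the (yz)x; the same holds with y and z exchanged.
  Expanding the Jacobiator of the commutator bracket, these two coincidences cancel all twelve
  terms.\<close>

lemma bilinear_product_diff_left:
  assumes "bilinear_product scale p"
  shows "p (x - y) z = p x z - p y z"
  using assms unfolding bilinear_product_def by (metis add_diff_cancel eq_diff_eq)

lemma bilinear_product_diff_right:
  assumes "bilinear_product scale p"
  shows "p x (y - z) = p x y - p x z"
  using assms unfolding bilinear_product_def by (metis add_diff_cancel eq_diff_eq)

lemma bilinear_product_commutator:
  assumes "vector_space scale" and "bilinear_product scale p"
  shows "bilinear_product scale (commutator p)"
proof -
  interpret vector_space scale by (rule assms(1))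
  show ?thesis
    using assms(2)
    by (simp add: bilinear_product_def commutator_def scale_right_diff_distrib)
qed

lemma commutator_self: "commutator p x x = 0"
  by (simp add: commutator_def)

lemma nearly_associative_cyclic_sum:
  fixes p :: "'a::ab_semigroup_add \<Rightarrow> 'a \<Rightarrow> 'a"
  assumes "nearly_associative p"
  shows "p x (p y z) + p y (p z x) + p z (p x y) = p (p y z) x + p (p z x) y + p (p x y) z"
  using assms unfolding nearly_associative_def by (simp add: ac_simps)

lemma nearly_associative_commutator_jacobi:
  assumes "bilinear_product scale p" and "nearly_associative p"
  shows "commutator p x (commutator p y z) + commutator p y (commutator p z x)
           + commutator p z (commutator p x y) = 0"
proof -
  note diff = bilinear_product_diff_left[OF assms(1)] bilinear_product_diff_right[OF assms(1)]
  have "commutator p x (commutator p y z) + commutator p y (commutator p z x)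
          + commutator p z (commutator p x y)
        = ((p x (p y z) + p y (p z x) + p z (p x y)) - (p (p y z) x + p (p z x) y + p (p x y) z))
          - ((p x (p z y) + p z (p y x) + p y (p x z)) - (p (p z y) x + p (p y x) z + p (p x z) y))"
    by (simp add: commutator_def diff algebra_simps)
  also have "\<dots> = 0"
    using nearly_associative_cyclic_sum[OF assms(2)] by simp
  finally show ?thesis .
qed

theorem mainTheorem1:
  fixes scale :: "'k::field_char_0 \<Rightarrow> 'a::ab_group_add \<Rightarrow> 'a"
    and p :: "'a \<Rightarrow> 'a \<Rightarrow> 'a"
  assumes "algebra_over scale p"
    and "nearly_associative p"
  shows "lie_admissible scale p"
proof -
  have vs: "vector_space scale" and bl: "bilinear_product scale p"
    using assms(1) by (simp_all add: algebra_over_def)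
  show ?thesis
    unfolding lie_admissible_def lie_algebra_def
    using vs bilinear_product_commutator[OF vs bl] commutator_self
      nearly_associative_commutator_jacobi[OF bl assms(2)]
    by blast
qed

end
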